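(* Let $q\in X^*\setminus\{e\}$ and let $\lambda_q$ be the largest positive real root of the polynomial $\mathfrak{p}_q(t):=t^{|q|}-\sum_{v\in\sqrt[*]{P_q}}t^{|q|-|v|}$. Then there are constants $c_{q,1},c_{q,2}>0$ such that for all $n\in\mathbb{N}$, $$c_{q,1}\lambda_q^n\le|\mathrm{infix}(Q_q)\cap X^n|\le c_{q,2}\lambda_q^n.$$
   Context: $X$ is a finite alphabet with $|X|\ge2$; $X^*$ the finite words (empty word $e$), $X^n$ the words of length $n$. $w\sqsubseteq\eta$ means $w$ is a prefix of $\eta$, $w\sqsubset\eta$ a proper prefix. $\mathrm{infix}(B)$ is the set of all finite factors (subwords) of words in $B$. A finite word $\eta$ is quasiperiodic with quasiperiod $q$ if for every natural number $j<|\eta|$ there is a prefix $u_j\sqsubseteq\eta$ with $j-|q|<|u_j|\le j$ and $u_j\cdot q\sqsubseteq\eta$; $Q_q$ is the set of such words (including $e$). $P_q:=\{v: e\sqsubset v\sqsubseteq q\sqsubset v\cdot q\}$, and $\sqrt[*]{P_q}:=P_q\setminus(P_q^2\cdot P_q^* )$ is its star root (elements of $P_q$ not a concatenation of two or more elements of $P_q$). *)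

theory Defs
  imports Main "HOL-Library.Sublist" "HOL-Computational_Algebra.Polynomial"
begin

text \<open>Words are lists; the alphabet is a finite set X. Prefix = Sublist.prefix,
  factor (infix) = Sublist.sublist (contiguous).\<close>

definition words_of_len :: "'a set \<Rightarrow> nat \<Rightarrow> 'a list set" where
  "words_of_len X n = {w \<in> lists X. length w = n}"

definition quasiperiodic_words :: "'a set \<Rightarrow> 'a list \<Rightarrow> 'a list set" where
  "quasiperiodic_words X q = {\<eta> \<in> lists X. \<forall>j < length \<eta>. \<exists>u. prefix u \<eta> \<and>
       j < length u + length q \<and> length u \<le> j \<and> prefix (u @ q) \<eta>}"

definition P_set :: "'a list \<Rightarrow> 'a list set" where
  "P_set q = {v. strict_prefix [] v \<and> prefix v q \<and> strict_prefix q (v @ q)}"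

definition lang_conc :: "'a list set \<Rightarrow> 'a list set \<Rightarrow> 'a list set" where
  "lang_conc A B = {u @ v | u v. u \<in> A \<and> v \<in> B}"

definition lang_star :: "'a list set \<Rightarrow> 'a list set" where
  "lang_star A = {concat ws | ws. set ws \<subseteq> A}"

definition star_root :: "'a list set \<Rightarrow> 'a list set" where
  "star_root A = A - lang_conc (lang_conc A A) (lang_star A)"

definition infixes :: "'a list set \<Rightarrow> 'a list set" where
  "infixes B = {w. \<exists>\<eta>\<in>B. sublist w \<eta>}"

definition char_poly :: "'a list \<Rightarrow> real poly" where
  "char_poly q = monom 1 (length q) - (\<Sum>v\<in>star_root (P_set q). monom 1 (length q - length v))"

end

theory Submission
  imports Defs
begin

text \<open>
  Let \<open>R\<close> be the star root of \<open>P_q\<close>.  The proof compares the number \<open>b n\<close> of length-\<open>n\<close>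
  factors of quasiperiodic words with the number \<open>a L\<close> of factorisations of length \<open>L\<close>
  over \<open>R\<close>:
  \<^item> \<open>R\<close> is a code (unique factorisation), and every product of elements of \<open>P_q\<close> is a
    product of elements of \<open>R\<close>;
  \<^item> \<open>x @ q\<close> is quasiperiodic for every \<open>x \<in> P_q\<^sup>*\<close>, which gives \<open>a j \<le> b n\<close> for \<open>j \<le> n\<close>;
  \<^item> conversely every factor of length \<open>n\<close> sits at an offset \<open>< |q|\<close> inside \<open>x @ q\<close> for some
    \<open>x \<in> R\<^sup>*\<close> with \<open>n - |q| \<le> |x| < n + |q|\<close>, which gives
    \<open>b n \<le> |q| * (\<Sum>L\<in>{n - |q|..<n + |q|}. a L)\<close>;
  \<^item> \<open>a\<close> satisfies the renewal recurrence \<open>a (n+1) = \<Sum>v\<in>R. a (n + 1 - |v|)\<close>, and a root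
    \<open>lam > 0\<close> of the characteristic polynomial normalises \<open>\<Sum>v\<in>R. lam^-|v| = 1\<close>.  A discrete
    renewal argument (conservation of the mass of blocks straddling \<open>n\<close>) shows
    \<open>a n \<le> lam ^ n\<close> and that \<open>a j \<ge> lam ^ j / |q|\<close> for some \<open>j\<close> in every window of \<open>|q|\<close>
    consecutive indices.
\<close>

section \<open>The prefix periods \<open>P_q\<close>\<close>

text \<open>\<open>P_set q\<close> consists of the nonempty prefixes \<open>v\<close> of \<open>q\<close> with \<open>q\<close> a prefix of \<open>v @ q\<close>,
  i.e. those whose length is a period of \<open>q\<close>.\<close>

lemma P_setD:
  assumes "v \<in> P_set q"
  shows "v \<noteq> [] \<and> prefix v q \<and> prefix q (v @ q)"
  using assms unfolding P_set_def by (auto simp: strict_prefix_def)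

lemma P_setI:
  assumes "v \<noteq> []" "prefix v q" "prefix q (v @ q)"
  shows "v \<in> P_set q"
  using assms unfolding P_set_def strict_prefix_def by (auto simp: Sublist.prefix_Nil)

lemma P_set_length: "v \<in> P_set q \<Longrightarrow> 0 < length v \<and> length v \<le> length q"
  using P_setD prefix_length_le by fastforce

lemma finite_P_set: "finite (P_set q)"
  by (rule finite_subset[of _ "set (prefixes q)"]) (auto dest: P_setD)

lemma self_in_P_set: "q \<noteq> [] \<Longrightarrow> q \<in> P_set q"
  by (rule P_setI) auto

lemma P_set_lists: "q \<in> lists X \<Longrightarrow> v \<in> P_set q \<Longrightarrow> v \<in> lists X"
  by (auto dest!: P_setD simp: prefix_def)

lemma prefix_concat_P_set:
  assumes "set vs \<subseteq> P_set q"
  shows "prefix q (concat vs @ q)"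
  using assms
proof (induction vs)
  case Nil
  then show ?case by simp
next
  case (Cons v vs)
  then have "prefix (v @ q) (v @ concat vs @ q)" by simp
  moreover have "prefix q (v @ q)" using Cons.prems P_setD by auto
  ultimately show ?case by (auto intro: prefix_order.trans)
qed

lemma P_set_from_occurrences:
  assumes pq: "prefix q s" and pd: "prefix q (drop k s)" and k: "0 < k" "k \<le> length q"
  shows "take k s \<in> P_set q"
proof (rule P_setI)
  have "length q \<le> length s" using pq prefix_length_le by blast
  then show "take k s \<noteq> []" using k by auto
  have "take k s = take k q" using pq k by (auto simp: prefix_def)
  then show "prefix (take k s) q" by (simp add: take_is_prefix)
  have "prefix (take k s @ q) (take k s @ drop k s)" using pd by (simp only: same_prefix_prefix)
  then have "prefix (take k s @ q) s" by simp
  then show "prefix q (take k s @ q)" using pq prefix_length_prefix by fastforce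
qed

lemma lang_star_Nil: "[] \<in> lang_star A"
  unfolding lang_star_def by (auto intro!: exI[of _ "[]"])

lemma lang_star_single: "x \<in> A \<Longrightarrow> x \<in> lang_star A"
  unfolding lang_star_def by (auto intro!: exI[of _ "[x]"])

lemma lang_star_append:
  assumes "x \<in> lang_star A" "y \<in> lang_star A"
  shows "x @ y \<in> lang_star A"
proof -
  obtain xs ys where "set xs \<subseteq> A" "x = concat xs" "set ys \<subseteq> A" "y = concat ys"
    using assms unfolding lang_star_def by auto
  then show ?thesis unfolding lang_star_def by (auto intro!: exI[of _ "xs @ ys"])
qed

lemma lang_star_concat: "\<forall>x\<in>set xs. x \<in> lang_star A \<Longrightarrow> concat xs \<in> lang_star A"
  by (induction xs) (auto intro: lang_star_append lang_star_Nil)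

lemma star_root_subset: "star_root A \<subseteq> A"
  unfolding star_root_def by auto

text \<open>For a language of nonempty words, the star root still generates every word of the
  language (by induction on the length: a non-root word splits into shorter words of the
  language), hence it generates the whole star closure.\<close>

lemma star_root_generates:
  assumes ne: "\<forall>v\<in>A. v \<noteq> []" and "v \<in> A"
  shows "v \<in> lang_star (star_root A)"
  using \<open>v \<in> A\<close>
proof (induction "length v" arbitrary: v rule: less_induct)
  case less
  show ?case
  proof (cases "v \<in> star_root A")
    case True
    then show ?thesis by (rule lang_star_single)
  next
    case False
    then obtain x y zs where v: "v = x @ y @ concat zs" and xy: "x \<in> A" "y \<in> A"
      and zs: "set zs \<subseteq> A"
      using less.prems unfolding star_root_def lang_conc_def lang_star_def by auto
    have lx: "0 < length x" and ly: "0 < length y" using xy ne by auto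
    have lv: "length v = length x + length y + length (concat zs)" using v by simp
    have shorter: "length w < length v" if "w \<in> set (x # y # zs)" for w
    proof -
      have "length w \<le> length (concat zs)" if "w \<in> set zs"
        using that by (induction zs) auto
      then consider "w = x" | "w = y" | "length w \<le> length (concat zs)"
        using \<open>w \<in> set (x # y # zs)\<close> by auto
      then show ?thesis using lx ly lv by cases (simp_all del: length_greater_0_conv)
    qed
    have "\<forall>w\<in>set (x # y # zs). w \<in> lang_star (star_root A)"
    proof
      fix w assume w: "w \<in> set (x # y # zs)"
      then have "w \<in> A" using xy zs by auto
      then show "w \<in> lang_star (star_root A)" using less.hyps[OF shorter[OF w]] by simp
    qed
    then have "concat (x # y # zs) \<in> lang_star (star_root A)" by (rule lang_star_concat)
    then show ?thesis using v by simp
  qed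
qed

lemma lang_star_star_root:
  assumes "\<forall>v\<in>A. v \<noteq> []"
  shows "lang_star A \<subseteq> lang_star (star_root A)"
proof
  fix x assume "x \<in> lang_star A"
  then obtain ws where "set ws \<subseteq> A" "x = concat ws" unfolding lang_star_def by auto
  then show "x \<in> lang_star (star_root A)"
    using star_root_generates[OF assms] by (auto intro!: lang_star_concat)
qed

section \<open>The star root of \<open>P_q\<close> is a code\<close>

text \<open>Core of unique factorisation: two factorisations of one word (each followed by an
  occurrence of \<open>q\<close>) cannot begin with a period \<open>a\<close> and a strictly longer root \<open>b\<close>,
  since then \<open>b\<close> would split as \<open>a\<close> followed by another period.\<close>

lemma star_root_no_proper_period_prefix:
  assumes lt: "length a < length b" and a: "a \<in> P_set q" and b: "b \<in> star_root (P_set q)"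
    and eq: "a @ ta = b @ tb" and oa: "prefix q ta" and ob: "prefix q tb"
  shows False
proof -
  define k where "k = length b - length a"
  have bP: "b \<in> P_set q" using b star_root_subset by blast
  have k: "0 < k" "k \<le> length q" using lt P_set_length[OF bP] unfolding k_def by auto
  have "drop k ta = drop (length b) (a @ ta)" using lt unfolding k_def by simp
  then have "drop k ta = tb" using eq by simp
  then have z: "take k ta \<in> P_set q" using P_set_from_occurrences[OF oa _ k] ob by simp
  have "a @ take k ta = take (length b) (a @ ta)" using lt unfolding k_def by simp
  then have "b = a @ take k ta" using eq by simp
  moreover have "a @ take k ta \<in> lang_conc (P_set q) (P_set q)"
    unfolding lang_conc_def using a z by blast
  ultimately have "b @ [] \<in> lang_conc (lang_conc (P_set q) (P_set q)) (lang_star (P_set q))"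
    unfolding lang_conc_def[of "lang_conc _ _"] using lang_star_Nil by blast
  then show False using b unfolding star_root_def by simp
qed

lemma star_root_unique_factorisation_aux:
  assumes "set us \<subseteq> star_root (P_set q)" "set ws \<subseteq> star_root (P_set q)"
    and "concat us @ q = concat ws @ q"
  shows "us = ws"
  using assms
proof (induction us arbitrary: ws)
  case Nil
  then have "concat ws = []" by simp
  moreover have "\<forall>w\<in>set ws. w \<noteq> []" using Nil.prems(2) star_root_subset P_setD by blast
  ultimately show ?case by simp
next
  case (Cons u us)
  have Ru: "u \<in> star_root (P_set q)" using Cons.prems(1) by simp
  then have Pu: "u \<in> P_set q" using star_root_subset by blast
  then have "u \<noteq> []" using P_setD by blast
  then obtain w ws' where wws: "ws = w # ws'"
    using Cons.prems(3) by (cases ws) auto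
  have Rw: "w \<in> star_root (P_set q)" using Cons.prems(2) wws by simp
  then have Pw: "w \<in> P_set q" using star_root_subset by blast
  have eq: "u @ (concat us @ q) = w @ (concat ws' @ q)" using Cons.prems(3) wws by simp
  have ou: "prefix q (concat us @ q)" and ow: "prefix q (concat ws' @ q)"
    using Cons.prems(1,2) wws star_root_subset by (auto intro!: prefix_concat_P_set)
  have "\<not> length u < length w" "\<not> length w < length u"
    using star_root_no_proper_period_prefix[OF _ Pu Rw eq ou ow]
      star_root_no_proper_period_prefix[OF _ Pw Ru eq[symmetric] ow ou] by blast+
  then have "length u = length w" by linarith
  then have "u = w" and "concat us @ q = concat ws' @ q"
    using eq append_eq_append_conv by blast+
  then show ?case using Cons wws by simp
qed

corollary star_root_unique_factorisation:
  assumes "set us \<subseteq> star_root (P_set q)" "set ws \<subseteq> star_root (P_set q)"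
    and "concat us = concat ws"
  shows "us = ws"
  using star_root_unique_factorisation_aux assms by auto

section \<open>Quasiperiodic words via occurrences\<close>

definition quasiperiodic :: "'a list \<Rightarrow> 'a list \<Rightarrow> bool" where
  "quasiperiodic q \<eta> \<longleftrightarrow>
     (\<forall>j < length \<eta>. \<exists>p \<le> j. j < p + length q \<and> prefix q (drop p \<eta>))"

lemma quasiperiodic_words_eq:
  "quasiperiodic_words X q = {\<eta> \<in> lists X. quasiperiodic q \<eta>}"
proof -
  have occ: "(\<exists>u. prefix u \<eta> \<and> j < length u + length q \<and> length u \<le> j \<and> prefix (u @ q) \<eta>)
      \<longleftrightarrow> (\<exists>p \<le> j. j < p + length q \<and> prefix q (drop p \<eta>))" for j and \<eta> :: "'a list"
  proof
    assume "\<exists>u. prefix u \<eta> \<and> j < length u + length q \<and> length u \<le> j \<and> prefix (u @ q) \<eta>"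
    then obtain u where "j < length u + length q" "length u \<le> j" "prefix (u @ q) \<eta>" by blast
    then show "\<exists>p \<le> j. j < p + length q \<and> prefix q (drop p \<eta>)"
      by (intro exI[of _ "length u"]) (auto simp: prefix_def)
  next
    assume "\<exists>p \<le> j. j < p + length q \<and> prefix q (drop p \<eta>)"
    then obtain p where p: "p \<le> j" "j < p + length q" "prefix q (drop p \<eta>)" by blast
    then have "p \<le> length \<eta>" using prefix_length_le[OF p(3)] by (cases q) auto
    moreover have "prefix (take p \<eta> @ q) \<eta>"
      using p(3) by (metis append_take_drop_id same_prefix_prefix)
    ultimately show "\<exists>u. prefix u \<eta> \<and> j < length u + length q \<and> length u \<le> j \<and> prefix (u @ q) \<eta>"
      using p by (intro exI[of _ "take p \<eta>"]) (auto simp: take_is_prefix)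
  qed
  show ?thesis unfolding quasiperiodic_words_def quasiperiodic_def occ ..
qed

lemma quasiperiodic_concat:
  assumes "set vs \<subseteq> P_set q"
  shows "quasiperiodic q (concat vs @ q)"
  using assms
proof (induction vs)
  case Nil
  show ?case unfolding quasiperiodic_def by (auto intro!: exI[of _ 0])
next
  case (Cons v vs)
  have IH: "quasiperiodic q (concat vs @ q)" using Cons by simp
  have lv: "length v \<le> length q" using Cons.prems P_set_length by auto
  have occ0: "prefix q (concat (v # vs) @ q)" using Cons.prems by (intro prefix_concat_P_set)
  show ?case unfolding quasiperiodic_def
  proof (intro allI impI)
    fix j assume j: "j < length (concat (v # vs) @ q)"
    show "\<exists>p \<le> j. j < p + length q \<and> prefix q (drop p (concat (v # vs) @ q))"
    proof (cases "j < length v")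
      case True
      then show ?thesis using occ0 lv by (intro exI[of _ 0]) auto
    next
      case False
      then have "j - length v < length (concat vs @ q)" using j by simp
      then obtain p where "p \<le> j - length v" "j - length v < p + length q"
          "prefix q (drop p (concat vs @ q))"
        using IH unfolding quasiperiodic_def by blast
      then show ?thesis using False by (intro exI[of _ "length v + p"]) auto
    qed
  qed
qed

lemma concat_P_set_quasiperiodic:
  assumes "set vs \<subseteq> P_set q" "q \<in> lists X"
  shows "concat vs @ q \<in> quasiperiodic_words X q"
  using assms quasiperiodic_concat P_set_lists unfolding quasiperiodic_words_eq by fastforce

text \<open>Between far-apart occurrences, the occurrence covering
  position \<open>p1 + |q|\<close> provides an intermediate one at distance at most \<open>|q|\<close> from \<open>p1\<close>.\<close>

lemma segment_between_occurrences:
  assumes Q: "quasiperiodic q \<eta>" and qn: "q \<noteq> []"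
    and o1: "prefix q (drop p1 \<eta>)" and o2: "prefix q (drop p2 \<eta>)" and le: "p1 \<le> p2"
  shows "drop p1 (take p2 \<eta>) \<in> lang_star (P_set q)"
  using o1 le
proof (induction "p2 - p1" arbitrary: p1 rule: less_induct)
  case less
  have l2: "p2 + length q \<le> length \<eta>" using prefix_length_le[OF o2] qn by (cases q) auto
  show ?case
  proof (cases "p2 - p1 \<le> length q")
    case True
    show ?thesis
    proof (cases "p1 = p2")
      case True
      then show ?thesis using lang_star_Nil by simp
    next
      case False
      then have "take (p2 - p1) (drop p1 \<eta>) \<in> P_set q"
        using P_set_from_occurrences[OF less.prems(1), of "p2 - p1"] o2 less.prems(2) True
        by (simp add: add.commute)
      then show ?thesis using lang_star_single by (simp add: take_drop less.prems(2))
    qed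
  next
    case False
    then have "p1 + length q < length \<eta>" using l2 by linarith
    then obtain p where p: "p \<le> p1 + length q" "p1 + length q < p + length q"
        and op: "prefix q (drop p \<eta>)"
      using Q unfolding quasiperiodic_def by blast
    have pp: "p1 < p" "p < p2" using p False by auto
    have rest: "drop p (take p2 \<eta>) \<in> lang_star (P_set q)"
      using less.hyps[of p] op pp less.prems by auto
    have "take (p - p1) (drop p1 \<eta>) \<in> P_set q"
      using P_set_from_occurrences[OF less.prems(1), of "p - p1"] op pp p by (simp add: add.commute)
    then have first: "drop p1 (take p \<eta>) \<in> P_set q" by (simp add: take_drop pp less_imp_le)
    have "take p2 \<eta> = take p \<eta> @ drop p (take p2 \<eta>)"
      using append_take_drop_id[of p "take p2 \<eta>"] pp by simp
    moreover have "length (take p \<eta>) = p" using pp l2 by simp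
    moreover have "drop p1 (take p \<eta> @ drop p (take p2 \<eta>)) = drop p1 (take p \<eta>) @ drop p (take p2 \<eta>)"
      using pp \<open>length (take p \<eta>) = p\<close> by simp
    ultimately have "drop p1 (take p2 \<eta>) = drop p1 (take p \<eta>) @ drop p (take p2 \<eta>)"
      by simp
    then show ?thesis using lang_star_append[OF lang_star_single[OF first] rest] by simp
  qed
qed

text \<open>Every nonempty factor \<open>w\<close> of a quasiperiodic word is read at an offset \<open>d < |q|\<close>
  inside \<open>x @ q\<close>, where \<open>x\<close> is a product of star-root words of length within \<open>|q|\<close> of
  \<open>|w|\<close>: take \<open>x\<close> to be the segment between the occurrences of \<open>q\<close> covering the first
  and the last letter of \<open>w\<close>.\<close>

lemma factor_window:
  assumes Q: "quasiperiodic q \<eta>" and qn: "q \<noteq> []"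
    and eta: "\<eta> = ps @ w @ ss" and wn: "w \<noteq> []"
  shows "\<exists>d x. d < length q \<and> x \<in> lang_star (star_root (P_set q)) \<and>
     length w \<le> length x + length q \<and> length x < length w + length q \<and>
     w = take (length w) (drop d (x @ q))"
proof -
  let ?m = "length q"
  define n where "n = length w"
  define A where "A = length ps"
  have wA: "w = take n (drop A \<eta>)" and lenA: "A + n \<le> length \<eta>"
    unfolding eta A_def n_def by simp_all
  have n1: "1 \<le> n" using wn unfolding n_def by (cases w) auto
  have "A < length \<eta>" "A + n - 1 < length \<eta>" using lenA n1 by linarith+
  then obtain p1 p2 where p1: "p1 \<le> A" "A < p1 + ?m" "prefix q (drop p1 \<eta>)"
      and p2: "p2 \<le> A + n - 1" "A + n - 1 < p2 + ?m" "prefix q (drop p2 \<eta>)"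
    using Q unfolding quasiperiodic_def by blast
  define pa where "pa = min p1 p2"
  have oa: "prefix q (drop pa \<eta>)" unfolding pa_def using p1 p2 by (simp add: min_def)
  have pa: "pa \<le> p2" "pa \<le> A" "A < pa + ?m" unfolding pa_def using p1 p2 n1 by auto
  define x where "x = drop pa (take p2 \<eta>)"
  have "x \<in> lang_star (P_set q)"
    unfolding x_def by (rule segment_between_occurrences[OF Q qn oa p2(3) pa(1)])
  then have xR: "x \<in> lang_star (star_root (P_set q))"
    using lang_star_star_root[of "P_set q"] P_setD by blast
  obtain r where r: "drop p2 \<eta> = q @ r" using p2(3) unfolding prefix_def by blast
  then have lp2: "p2 \<le> length \<eta>" using qn by (metis drop_eq_Nil Nil_is_append_conv not_le_imp_less less_imp_le)
  have "take (p2 + ?m) \<eta> = take p2 \<eta> @ q" using r by (simp add: take_add)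
  then have xq: "x @ q = drop pa (take (p2 + ?m) \<eta>)" unfolding x_def using pa(1) lp2 by simp
  have "take n (drop (A - pa) (x @ q)) = take n (drop A (take (p2 + ?m) \<eta>))"
    unfolding xq using pa(2) by simp
  also have "\<dots> = w" unfolding wA using p2(2) n1 by (simp add: take_drop min_def)
  finally have weq: "w = take n (drop (A - pa) (x @ q))" ..
  have lx: "length x = p2 - pa" unfolding x_def using lp2 by simp
  have "A - pa < ?m" "length w \<le> length x + ?m" "length x < length w + ?m"
    using lx p2 pa n1 unfolding n_def by linarith+
  with xR weq show ?thesis unfolding n_def by blast
qed

section \<open>Counting factorisations\<close>

text \<open>For \<open>R\<close> the star
  root of \<open>P_q\<close> these are in bijection with the words of \<open>R\<^sup>*\<close> of length \<open>L\<close>.\<close>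

definition seqs :: "'a list set \<Rightarrow> nat \<Rightarrow> 'a list list set" where
  "seqs R L = {ws. set ws \<subseteq> R \<and> sum_list (map length ws) = L}"

lemma lang_star_in_seqs:
  assumes "x \<in> lang_star R"
  shows "x \<in> concat ` seqs R (length x)"
proof -
  obtain ws where "set ws \<subseteq> R" "x = concat ws" using assms unfolding lang_star_def by blast
  then show ?thesis unfolding seqs_def by (intro image_eqI[of _ _ ws]) (simp_all add: length_concat)
qed

lemma seqs_finite:
  assumes "finite R" "\<forall>v\<in>R. v \<noteq> []"
  shows "finite (seqs R L)"
proof -
  have "length ws \<le> sum_list (map length ws)" if "set ws \<subseteq> R" for ws :: "'a list list"
  proof -
    have "\<forall>w\<in>set ws. 1 \<le> length w" using that assms(2) by (auto simp: Suc_le_eq)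
    then show ?thesis by (induction ws) auto
  qed
  then have "seqs R L \<subseteq> {ws. set ws \<subseteq> R \<and> length ws \<le> L}" unfolding seqs_def by force
  then show ?thesis using finite_lists_length_le[OF assms(1)] finite_subset by blast
qed

lemma seqs_0:
  assumes "\<forall>v\<in>R. v \<noteq> []"
  shows "seqs R 0 = {[]}"
proof -
  have "ws = []" if "set ws \<subseteq> R" "sum_list (map length ws) = 0" for ws :: "'a list list"
    using that assms by (cases ws) auto
  then show ?thesis unfolding seqs_def by auto
qed

lemma seqs_Suc:
  "seqs R (Suc n) =
     (\<Union>v\<in>R. if length v \<le> Suc n then (\<lambda>ws. v # ws) ` seqs R (Suc n - length v) else {})"
proof (rule set_eqI)
  fix ws
  show "ws \<in> seqs R (Suc n) \<longleftrightarrow>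
     ws \<in> (\<Union>v\<in>R. if length v \<le> Suc n then (\<lambda>ws. v # ws) ` seqs R (Suc n - length v) else {})"
  proof (cases ws)
    case (Cons v ws')
    show ?thesis
    proof
      assume "ws \<in> seqs R (Suc n)"
      then have "v \<in> R" "set ws' \<subseteq> R" "length v + sum_list (map length ws') = Suc n"
        using Cons unfolding seqs_def by auto
      then show "ws \<in> (\<Union>v\<in>R. if length v \<le> Suc n then (\<lambda>ws. v # ws) ` seqs R (Suc n - length v) else {})"
        using Cons unfolding seqs_def by (intro UN_I[of v]) auto
    qed (auto simp: seqs_def split: if_splits)
  qed (auto simp: seqs_def)
qed

lemma card_seqs_Suc:
  assumes "finite R" "\<forall>v\<in>R. v \<noteq> []"
  shows "real (card (seqs R (Suc n))) =
    (\<Sum>v\<in>R. if length v \<le> Suc n then real (card (seqs R (Suc n - length v))) else 0)"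
proof -
  have "card (seqs R (Suc n)) = (\<Sum>v\<in>R. card
      (if length v \<le> Suc n then (\<lambda>ws. v # ws) ` seqs R (Suc n - length v) else {}))"
    unfolding seqs_Suc by (rule card_UN_disjoint) (use assms seqs_finite in auto)
  also have "\<dots> = (\<Sum>v\<in>R. if length v \<le> Suc n then card (seqs R (Suc n - length v)) else 0)"
    by (intro sum.cong refl) (auto simp: card_image)
  finally show ?thesis by (simp add: of_nat_sum if_distrib cong: if_cong)
qed

lemma star_root_P_set_props:
  "finite (star_root (P_set q))" "\<forall>v\<in>star_root (P_set q). v \<noteq> [] \<and> length v \<le> length q"
  using star_root_subset finite_P_set finite_subset P_set_length by fastforce+

text \<open>Lower bound: for \<open>j \<le> n\<close>, padding a factorisation of length \<open>j\<close> with copies of \<open>q\<close> and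
  cutting at length \<open>n\<close> gives a factor of a quasiperiodic word; by unique factorisation
  the first \<open>j\<close> letters recover the factorisation, so the map is injective.\<close>

lemma factor_count_lower:
  assumes fin: "finite X" and Xq: "q \<in> lists X" and qn: "q \<noteq> []" and jn: "j \<le> n"
  shows "card (seqs (star_root (P_set q)) j)
    \<le> card (infixes (quasiperiodic_words X q) \<inter> words_of_len X n)"
proof -
  let ?R = "star_root (P_set q)"
  define F where "F ws = take n (concat (ws @ replicate n q) @ q)" for ws
  have "inj_on F (seqs ?R j)"
  proof (rule inj_onI)
    fix ws1 ws2 assume w: "ws1 \<in> seqs ?R j" "ws2 \<in> seqs ?R j" and eq: "F ws1 = F ws2"
    have "take j (F ws) = concat ws" if "ws \<in> seqs ?R j" for ws
      using that jn unfolding F_def seqs_def by (simp add: length_concat)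
    then have "concat ws1 = concat ws2" using w eq by metis
    then show "ws1 = ws2" using star_root_unique_factorisation w unfolding seqs_def by blast
  qed
  moreover have "F ` seqs ?R j \<subseteq> infixes (quasiperiodic_words X q) \<inter> words_of_len X n"
  proof
    fix w assume "w \<in> F ` seqs ?R j"
    then obtain ws where ws: "ws \<in> seqs ?R j" and w: "w = F ws" by blast
    define \<eta> where "\<eta> = concat (ws @ replicate n q) @ q"
    have "set (ws @ replicate n q) \<subseteq> P_set q"
      using ws star_root_subset self_in_P_set[OF qn] unfolding seqs_def by auto
    then have Q: "\<eta> \<in> quasiperiodic_words X q"
      unfolding \<eta>_def using concat_P_set_quasiperiodic Xq by blast
    have "n \<le> n * length q" using qn by (cases q) auto
    moreover have "length \<eta> = length (concat ws) + n * length q + length q"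
      unfolding \<eta>_def by (simp add: length_concat sum_list_replicate)
    ultimately have "n \<le> length \<eta>" by linarith
    moreover have "\<eta> \<in> lists X" using Q unfolding quasiperiodic_words_def by blast
    ultimately show "w \<in> infixes (quasiperiodic_words X q) \<inter> words_of_len X n"
      using Q unfolding w F_def \<eta>_def[symmetric] infixes_def words_of_len_def
      by (auto intro!: prefix_imp_sublist take_is_prefix dest: in_set_takeD)
  qed
  moreover have "finite (words_of_len X n)"
    unfolding words_of_len_def using finite_lists_length_eq[OF fin] by (simp add: lists_eq_set)
  ultimately show ?thesis by (intro card_inj_on_le) blast+
qed

lemma factor_count_upper:
  assumes qn: "q \<noteq> []" and n1: "1 \<le> n"
  shows "card (infixes (quasiperiodic_words X q) \<inter> words_of_len X n)
     \<le> length q * (\<Sum>L\<in>{n - length q..<n + length q}. card (seqs (star_root (P_set q)) L))"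
proof -
  let ?m = "length q" and ?R = "star_root (P_set q)"
  define W where "W = (\<Union>L\<in>{n - ?m..<n + ?m}. concat ` seqs ?R L)"
  define G where "G p = take n (drop (fst p) (snd p @ q))" for p :: "nat \<times> 'a list"
  have fin_seqs: "finite (seqs ?R L)" for L
    using seqs_finite star_root_P_set_props by blast
  have "infixes (quasiperiodic_words X q) \<inter> words_of_len X n \<subseteq> G ` ({..<?m} \<times> W)"
  proof
    fix w assume w: "w \<in> infixes (quasiperiodic_words X q) \<inter> words_of_len X n"
    then obtain \<eta> ps ss where Q: "\<eta> \<in> quasiperiodic_words X q" and eta: "\<eta> = ps @ w @ ss"
      unfolding infixes_def sublist_def by blast
    have lw: "length w = n" using w unfolding words_of_len_def by simp
    then obtain d x where dx: "d < ?m" "x \<in> lang_star ?R" "n \<le> length x + ?m"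
        "length x < n + ?m" "w = take n (drop d (x @ q))"
      using factor_window[OF _ qn eta] Q n1 unfolding quasiperiodic_words_eq by fastforce
    then have "x \<in> W" unfolding W_def using lang_star_in_seqs[OF dx(2)] by auto
    then show "w \<in> G ` ({..<?m} \<times> W)"
      using dx unfolding G_def by (intro image_eqI[of _ _ "(d, x)"]) auto
  qed
  moreover have fin: "finite ({..<?m} \<times> W)" unfolding W_def using fin_seqs by blast
  ultimately have "card (infixes (quasiperiodic_words X q) \<inter> words_of_len X n)
      \<le> card (G ` ({..<?m} \<times> W))"
    by (intro card_mono finite_imageI)
  also have "\<dots> \<le> card ({..<?m} \<times> W)" using fin by (rule card_image_le)
  also have "\<dots> = ?m * card W" by (simp add: card_cartesian_product)
  also have "card W \<le> (\<Sum>L\<in>{n - ?m..<n + ?m}. card (concat ` seqs ?R L))"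
    unfolding W_def by (rule card_UN_le) simp
  also have "\<dots> \<le> (\<Sum>L\<in>{n - ?m..<n + ?m}. card (seqs ?R L))"
    by (intro sum_mono card_image_le fin_seqs)
  finally show ?thesis by simp
qed

section \<open>A discrete renewal argument\<close>

text \<open>Then \<open>a n * mu ^ n\<close> is a renewal probability; it is at most \<open>1\<close>, and among any \<open>M\<close>
  consecutive indices it is at least \<open>1 / M\<close> once.\<close>

locale renewal =
  fixes R :: "'b set" and l :: "'b \<Rightarrow> nat" and M :: nat and mu :: real and a :: "nat \<Rightarrow> real"
  assumes finite_R: "finite R"
    and l_pos: "\<And>v. v \<in> R \<Longrightarrow> 1 \<le> l v"
    and l_le_M: "\<And>v. v \<in> R \<Longrightarrow> l v \<le> M"
    and mu_pos: "0 < mu"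
    and mu_normalised: "(\<Sum>v\<in>R. mu ^ l v) = 1"
    and a_0: "a 0 = 1"
    and a_Suc: "\<And>n. a (Suc n) = (\<Sum>v\<in>R. if l v \<le> Suc n then a (Suc n - l v) else 0)"
    and a_nonneg: "\<And>n. 0 \<le> a n"
begin

text \<open>The total weight of the blocks that start at some \<open>j \<le> n\<close> and end after \<open>n\<close>;
  the whole argument rests on this quantity being constantly \<open>1\<close>.\<close>

definition straddle_mass :: "nat \<Rightarrow> real" where
  "straddle_mass n = (\<Sum>j\<le>n. \<Sum>v\<in>R. if n < j + l v then a j * mu ^ (j + l v) else 0)"

lemma block_mass: "(\<Sum>v\<in>R. a k * mu ^ (k + l v)) = a k * mu ^ k"
proof -
  have "(\<Sum>v\<in>R. a k * mu ^ (k + l v)) = a k * mu ^ k * (\<Sum>v\<in>R. mu ^ l v)"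
    by (simp add: power_add sum_distrib_left mult.assoc)
  then show ?thesis using mu_normalised by simp
qed

lemma ending_mass:
  "(\<Sum>j\<le>n. \<Sum>v\<in>R. if j + l v = Suc n then a j * mu ^ (j + l v) else 0) = a (Suc n) * mu ^ Suc n"
proof -
  have "(\<Sum>j\<le>n. if j + l v = Suc n then a j * mu ^ (j + l v) else 0)
      = (if l v \<le> Suc n then a (Suc n - l v) * mu ^ Suc n else 0)" (is "?lhs v = ?rhs v")
    if v: "v \<in> R" for v
  proof (cases "l v \<le> Suc n")
    case True
    then have "(\<Sum>j\<le>n. if j + l v = Suc n then a j * mu ^ (j + l v) else 0)
        = (\<Sum>j\<le>n. if j = Suc n - l v then a j * mu ^ Suc n else 0)"
      by (intro sum.cong refl) (auto simp: le_imp_diff_is_add)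
    also have "\<dots> = a (Suc n - l v) * mu ^ Suc n"
      using l_pos[OF v] by (simp add: sum.delta)
    finally show ?thesis using True by simp
  next
    case False
    then have "?lhs v = 0" by (intro sum.neutral) auto
    then show ?thesis using False by simp
  qed
  note per_block = this
  have "(\<Sum>j\<le>n. \<Sum>v\<in>R. if j + l v = Suc n then a j * mu ^ (j + l v) else 0) = (\<Sum>v\<in>R. ?lhs v)"
    by (rule sum.swap)
  also have "\<dots> = (\<Sum>v\<in>R. ?rhs v)" using per_block by (rule sum.cong[OF refl])
  also have "\<dots> = a (Suc n) * mu ^ Suc n"
    unfolding a_Suc sum_distrib_right by (intro sum.cong refl) auto
  finally show ?thesis .
qed

lemma straddle_mass_0: "straddle_mass 0 = 1"
proof -
  have "straddle_mass 0 = (\<Sum>v\<in>R. a 0 * mu ^ (0 + l v))"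
    unfolding straddle_mass_def using l_pos by (auto simp: Suc_le_eq intro!: sum.cong)
  then show ?thesis using block_mass[of 0] a_0 by simp
qed

text \<open>Passing from \<open>n\<close> to \<open>n + 1\<close>, the blocks ending at \<open>n + 1\<close> leave and the blocks
  starting at \<open>n + 1\<close> enter; both carry weight \<open>a (n + 1) * mu ^ (n + 1)\<close>.\<close>

lemma straddle_mass_Suc: "straddle_mass (Suc n) = straddle_mass n"
proof -
  let ?w = "\<lambda>j v. a j * mu ^ (j + l v)"
  let ?staying = "\<Sum>j\<le>n. \<Sum>v\<in>R. if Suc n < j + l v then ?w j v else 0"
  have "straddle_mass n
      = ?staying + (\<Sum>j\<le>n. \<Sum>v\<in>R. if j + l v = Suc n then ?w j v else 0)"
    unfolding straddle_mass_def sum.distrib[symmetric] by (intro sum.cong refl) auto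
  also have "\<dots> = ?staying + a (Suc n) * mu ^ Suc n" by (simp only: ending_mass)
  finally have old: "straddle_mass n = ?staying + a (Suc n) * mu ^ Suc n" .
  have "(\<Sum>v\<in>R. if Suc n < Suc n + l v then ?w (Suc n) v else 0) = (\<Sum>v\<in>R. ?w (Suc n) v)"
    using l_pos by (intro sum.cong refl) (simp add: Suc_le_eq)
  then have "straddle_mass (Suc n) = ?staying + a (Suc n) * mu ^ Suc n"
    unfolding straddle_mass_def using block_mass[of "Suc n"] by simp
  then show ?thesis using old by simp
qed

lemma straddle_mass_eq_1: "straddle_mass n = 1"
  by (induction n) (simp_all add: straddle_mass_0 straddle_mass_Suc)

lemma renewal_upper: "a n * mu ^ n \<le> 1"
proof -
  have "a n * mu ^ n = (\<Sum>v\<in>R. if n < n + l v then a n * mu ^ (n + l v) else 0)"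
    using block_mass[of n] l_pos by (simp add: Suc_le_eq cong: sum.cong)
  also have "\<dots> \<le> straddle_mass n" unfolding straddle_mass_def
    by (rule member_le_sum) (auto intro!: sum_nonneg simp: a_nonneg mu_pos less_imp_le)
  finally show ?thesis using straddle_mass_eq_1 by simp
qed

lemma R_nonempty: "R \<noteq> {}"
  using mu_normalised by auto

lemma one_le_M: "1 \<le> M"
proof -
  obtain v where "v \<in> R" using R_nonempty by blast
  then show ?thesis using l_pos l_le_M by (meson order_trans)
qed

lemma mu_le_1: "mu \<le> 1"
proof -
  obtain v where v: "v \<in> R" using R_nonempty by blast
  have "mu ^ l v \<le> 1"
    using mu_normalised member_le_sum[OF v, of "\<lambda>v. mu ^ l v"] mu_pos finite_R by simp
  show ?thesis
  proof (rule ccontr)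
    assume "\<not> mu \<le> 1"
    then have "1 < mu ^ l v" using l_pos[OF v] by (intro one_less_power) auto
    then show False using \<open>mu ^ l v \<le> 1\<close> by simp
  qed
qed

text \<open>Only the renewals \<open>j\<close> among the last \<open>M\<close> indices up to \<open>n\<close> can carry a block
  straddling \<open>n\<close>, and all blocks starting at \<open>j\<close> together weigh \<open>a j * mu ^ j\<close>.\<close>

lemma straddle_mass_le_window:
  "straddle_mass n \<le> (\<Sum>j\<in>{j\<in>{..n}. n < j + M}. a j * mu ^ j)"
proof -
  have "straddle_mass n \<le> (\<Sum>j\<le>n. if n < j + M then a j * mu ^ j else 0)"
    unfolding straddle_mass_def
  proof (rule sum_mono)
    fix j
    have "(\<Sum>v\<in>R. if n < j + l v then a j * mu ^ (j + l v) else 0)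
        \<le> (\<Sum>v\<in>R. if n < j + M then a j * mu ^ (j + l v) else 0)"
    proof (rule sum_mono)
      fix v assume "v \<in> R"
      then have "l v \<le> M" by (rule l_le_M)
      then show "(if n < j + l v then a j * mu ^ (j + l v) else 0)
          \<le> (if n < j + M then a j * mu ^ (j + l v) else 0)"
        using a_nonneg[of j] mu_pos by auto
    qed
    also have "\<dots> = (if n < j + M then a j * mu ^ j else 0)"
      using block_mass[of j] by simp
    finally show "(\<Sum>v\<in>R. if n < j + l v then a j * mu ^ (j + l v) else 0) \<le> \<dots>" .
  qed
  also have "\<dots> = (\<Sum>j\<in>{j\<in>{..n}. n < j + M}. a j * mu ^ j)"
    by (rule sum.inter_filter[symmetric]) simp
  finally show ?thesis .
qed

text \<open>Since \<open>straddle_mass n = 1\<close> is spread over at most \<open>M\<close> indices, one of them has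
  \<open>a j * mu ^ j \<ge> 1 / M\<close>.\<close>

lemma renewal_lower: "\<exists>j\<le>n. n < j + M \<and> 1 / real M \<le> a j * mu ^ j"
proof (rule ccontr)
  assume "\<not> ?thesis"
  then have small: "\<And>j. j \<le> n \<Longrightarrow> n < j + M \<Longrightarrow> a j * mu ^ j < 1 / real M" by force
  define J where "J = {j\<in>{..n}. n < j + M}"
  have "J \<subseteq> {Suc n - M..n}" unfolding J_def by auto
  then have J_card: "card J \<le> M" using card_mono[of "{Suc n - M..n}" J] by simp
  have "1 = straddle_mass n" using straddle_mass_eq_1 by simp
  also have "\<dots> \<le> (\<Sum>j\<in>J. a j * mu ^ j)" unfolding J_def by (rule straddle_mass_le_window)
  also have "\<dots> < (\<Sum>j\<in>J. 1 / real M)"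
  proof (rule sum_strict_mono)
    show "finite J" unfolding J_def by simp
    show "J \<noteq> {}" using one_le_M unfolding J_def by auto
  qed (use small in \<open>auto simp: J_def\<close>)
  also have "\<dots> \<le> 1" using J_card one_le_M by (simp add: divide_le_eq_1)
  finally show False by simp
qed

lemma growth_power_cancel: "mu ^ k * (1 / mu) ^ k = 1"
  using mu_pos by (simp add: power_one_over)

lemma growth_lower:
  assumes dominates: "\<And>j n. j \<le> n \<Longrightarrow> a j \<le> b n"
  shows "\<exists>c>0. \<forall>n. c * (1 / mu) ^ n \<le> b n"
proof (intro exI conjI allI)
  show "0 < mu ^ M / real M" using mu_pos one_le_M by simp
  fix n
  obtain j where j: "j \<le> n" "n < j + M" "1 / real M \<le> a j * mu ^ j"
    using renewal_lower by blast
  have "(1 / mu) ^ n \<le> (1 / mu) ^ (j + M)"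
    using mu_le_1 mu_pos j by (intro power_increasing) auto
  then have "mu ^ M * (1 / mu) ^ n \<le> mu ^ M * (1 / mu) ^ (j + M)" using mu_pos by simp
  also have "\<dots> = (1 / mu) ^ j" using growth_power_cancel[of M] by (simp add: power_add)
  finally have "mu ^ M / real M * (1 / mu) ^ n \<le> (1 / mu) ^ j / real M"
    using one_le_M by (simp add: divide_right_mono)
  also have "\<dots> \<le> a j * mu ^ j * (1 / mu) ^ j"
    using mult_right_mono[OF j(3), of "(1 / mu) ^ j"] mu_pos by simp
  also have "\<dots> = a j" using growth_power_cancel[of j] by (simp add: mult.assoc)
  also have "\<dots> \<le> b n" using dominates j(1) .
  finally show "mu ^ M / real M * (1 / mu) ^ n \<le> b n" .
qed

lemma growth_upper:
  assumes dominated: "\<And>n. 1 \<le> n \<Longrightarrow> b n \<le> real M * (\<Sum>L\<in>{n - M..<n + M}. a L)"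
    and b_0: "b 0 \<le> 1"
  shows "\<exists>c>0. \<forall>n. b n \<le> c * (1 / mu) ^ n"
proof (intro exI conjI allI)
  let ?c = "2 * real M * real M * (1 / mu) ^ M + 1"
  show "0 < ?c" using mu_pos by (simp add: add_nonneg_pos)
  have a_le: "a L \<le> (1 / mu) ^ (n + M)" if "L \<le> n + M" for L n
  proof -
    have "a L = a L * mu ^ L * (1 / mu) ^ L" using growth_power_cancel[of L] by (simp add: mult.assoc)
    also have "\<dots> \<le> (1 / mu) ^ L" using renewal_upper[of L] mu_pos by (simp add: mult_le_one)
    also have "\<dots> \<le> (1 / mu) ^ (n + M)" using mu_le_1 mu_pos that by (intro power_increasing) auto
    finally show ?thesis .
  qed
  fix n
  show "b n \<le> ?c * (1 / mu) ^ n"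
  proof (cases "n = 0")
    case True
    have "0 \<le> 2 * real M * real M * (1 / mu) ^ M" using mu_pos by simp
    then show ?thesis using b_0 True by simp
  next
    case False
    then have "b n \<le> real M * (\<Sum>L\<in>{n - M..<n + M}. a L)" using dominated by simp
    also have "\<dots> \<le> real M * (\<Sum>L\<in>{n - M..<n + M}. (1 / mu) ^ (n + M))"
      by (intro mult_left_mono sum_mono a_le) auto
    also have "\<dots> \<le> real M * (2 * real M * (1 / mu) ^ (n + M))"
      using mu_pos by (intro mult_left_mono mult_right_mono) auto
    also have "\<dots> = (2 * real M * real M * (1 / mu) ^ M) * (1 / mu) ^ n"
      by (simp add: power_add algebra_simps)
    also have "\<dots> \<le> ?c * (1 / mu) ^ n" using mu_pos by (simp add: distrib_right)
    finally show ?thesis .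
  qed
qed

end

text \<open>Dividing \<open>p_q(lam) = 0\<close> by \<open>lam ^ |q|\<close> turns the characteristic equation into the
  normalisation \<open>\<Sum>v. (1/lam) ^ |v| = 1\<close> of the renewal setting.\<close>

lemma char_poly_root_normalised:
  assumes root: "poly (char_poly q) lam = 0" and lam: "0 < lam"
  shows "(\<Sum>v\<in>star_root (P_set q). (1 / lam) ^ length v) = 1"
proof -
  let ?R = "star_root (P_set q)"
  have "poly (char_poly q) lam = lam ^ length q - (\<Sum>v\<in>?R. lam ^ (length q - length v))"
    unfolding char_poly_def by (simp add: poly_monom poly_sum)
  then have sum_eq: "(\<Sum>v\<in>?R. lam ^ (length q - length v)) = lam ^ length q" using root by simp
  have "(1 / lam) ^ length v = lam ^ (length q - length v) / lam ^ length q" if "v \<in> ?R" for v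
  proof -
    have "length v \<le> length q" using that star_root_P_set_props by blast
    then have "lam ^ length q = lam ^ (length q - length v) * lam ^ length v"
      by (simp flip: power_add)
    then show ?thesis using lam by (simp add: power_one_over field_simps)
  qed
  then have "(\<Sum>v\<in>?R. (1 / lam) ^ length v) = (\<Sum>v\<in>?R. lam ^ (length q - length v)) / lam ^ length q"
    by (simp add: sum_divide_distrib)
  then show ?thesis using sum_eq lam by simp
qed

lemma star_root_renewal:
  assumes lam: "0 < lam" and root: "poly (char_poly q) lam = 0"
  shows "renewal (star_root (P_set q)) length (length q) (1 / lam)
           (\<lambda>L. real (card (seqs (star_root (P_set q)) L)))"
proof
  let ?R = "star_root (P_set q)"
  have ne: "\<forall>v\<in>?R. v \<noteq> []" using star_root_P_set_props by blast
  show "finite ?R" using star_root_P_set_props by blast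
  show "1 \<le> length v" "length v \<le> length q" if "v \<in> ?R" for v
    using that star_root_P_set_props by (auto simp: Suc_le_eq)
  show "0 < 1 / lam" using lam by simp
  show "(\<Sum>v\<in>?R. (1 / lam) ^ length v) = 1" using char_poly_root_normalised[OF root lam] .
  show "real (card (seqs ?R 0)) = 1" using seqs_0[OF ne] by simp
  show "real (card (seqs ?R (Suc n))) =
      (\<Sum>v\<in>?R. if length v \<le> Suc n then real (card (seqs ?R (Suc n - length v))) else 0)" for n
    using \<open>finite ?R\<close> ne by (rule card_seqs_Suc)
qed simp

lemma card_words_of_len_0: "card (A \<inter> words_of_len X 0) \<le> 1"
proof -
  have "A \<inter> words_of_len X 0 \<subseteq> {[]}" unfolding words_of_len_def by auto
  then have "card (A \<inter> words_of_len X 0) \<le> card {[] :: 'a list}" by (intro card_mono) auto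
  then show ?thesis by simp
qed

theorem lemma3:
  fixes X :: "'a set" and q :: "'a list" and lam :: real
  assumes "finite X" and "2 \<le> card X"
    and "q \<in> lists X" and "q \<noteq> []"
    and "lam > 0" and "poly (char_poly q) lam = 0"
    and "\<forall>t>0. poly (char_poly q) t = 0 \<longrightarrow> t \<le> lam"
  shows "\<exists>c1 c2. c1 > 0 \<and> c2 > 0 \<and> (\<forall>n::nat.
           c1 * lam ^ n \<le> real (card (infixes (quasiperiodic_words X q) \<inter> words_of_len X n)) \<and>
           real (card (infixes (quasiperiodic_words X q) \<inter> words_of_len X n)) \<le> c2 * lam ^ n)"
proof -
  let ?R = "star_root (P_set q)"
  let ?b = "\<lambda>n. real (card (infixes (quasiperiodic_words X q) \<inter> words_of_len X n))"
  interpret renewal ?R length "length q" "1 / lam" "\<lambda>L. real (card (seqs ?R L))"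
    using star_root_renewal assms(5,6) .
  have "\<exists>c>0. \<forall>n. c * (1 / (1 / lam)) ^ n \<le> ?b n"
    by (rule growth_lower) (use factor_count_lower[OF assms(1,3,4)] in simp)
  then obtain c1 where c1: "c1 > 0" "\<forall>n. c1 * lam ^ n \<le> ?b n" by auto
  have "\<exists>c>0. \<forall>n. ?b n \<le> c * (1 / (1 / lam)) ^ n"
  proof (rule growth_upper)
    show "?b n \<le> real (length q) * (\<Sum>L\<in>{n - length q..<n + length q}. real (card (seqs ?R L)))"
      if "1 \<le> n" for n
      using factor_count_upper[OF assms(4) that, of X] by (simp flip: of_nat_sum of_nat_mult)
    show "?b 0 \<le> 1" using card_words_of_len_0 by simp
  qed
  then obtain c2 where c2: "c2 > 0" "\<forall>n. ?b n \<le> c2 * lam ^ n" by auto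
  from c1 c2 show ?thesis by blast
qed

end
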